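(* For any $n\ge1$, the map $\lambda$ defined on covering pairs $u\lessdot v$ of $(\mathsf{Tr}(n),\preccurlyeq)$ by $\lambda(u,v):=(i,u_i)$, where $i$ is the unique index with $u_i\neq v_i$, is an EL-labelling of $(\mathsf{Tr}(n),\preccurlyeq)$ with values in $\mathbb{Z}^2$ ordered lexicographically. Moreover, there is at most one $\lambda$-weakly decreasing saturated chain between any pair of comparable elements of $\mathsf{Tr}(n)$.
   Context: A triword of size $n$ is a word $u=u_1\cdots u_n$ with $u_i\in\{0,1,2\}$, $u_1\ne 2$, and such that $u_i=0$ implies $u_j\neq 1$ for all $j>i$; $\mathsf{Tr}(n)$ is their set, ordered componentwise: $u\preccurlyeq v$ iff $u_i\le v_i$ for all $i$. Covering pairs in this poset differ in exactly one letter, so $\lambda$ is well defined. A saturated chain is a sequence $x_1\lessdot x_2\lessdot\cdots\lessdot x_r$ of successive coverings; its label sequence is $(\lambda(x_1,x_2),\dots,\lambda(x_{r-1},x_r))$. A saturated chain is $\lambda$-increasing (resp. $\lambda$-weakly decreasing) if its label sequence is strictly increasing (resp. weakly decreasing) in the order of $\mathbb{Z}^2$ (lexicographic); one chain is $\lambda$-smaller than another if its label sequence is smaller in the lexicographic order on sequences induced by that order. For a bounded poset, $\lambda$ is an EL-labelling if for all $x\preccurlyeq y$ there is exactly one $\lambda$-increasing saturated chain from $x$ to $y$, and it is $\lambda$-minimal (lexicographically smallest) among all saturated chains from $x$ to $y$. *)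

theory Defs
  imports Main
begin

text \<open>Words are lists of naturals; position i of the list (0-based) is letter u_(i+1) of the paper.\<close>

definition triword :: "nat \<Rightarrow> nat list \<Rightarrow> bool" where
  "triword n u \<longleftrightarrow> length u = n \<and> set u \<subseteq> {0, 1, 2}
     \<and> (n \<ge> 1 \<longrightarrow> u ! 0 \<noteq> 2)
     \<and> (\<forall>i j. i < j \<and> j < n \<and> u ! i = 0 \<longrightarrow> u ! j \<noteq> 1)"

definition Tr :: "nat \<Rightarrow> nat list set" where
  "Tr n = {u. triword n u}"

definition comp_le :: "nat list \<Rightarrow> nat list \<Rightarrow> bool" where
  "comp_le u v \<longleftrightarrow> length u = length v \<and> (\<forall>i < length u. u ! i \<le> v ! i)"

definition bounded_poset :: "'a set \<Rightarrow> ('a \<Rightarrow> 'a \<Rightarrow> bool) \<Rightarrow> bool" where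
  "bounded_poset P le \<longleftrightarrow>
     (\<forall>x\<in>P. le x x)
   \<and> (\<forall>x\<in>P. \<forall>y\<in>P. le x y \<and> le y x \<longrightarrow> x = y)
   \<and> (\<forall>x\<in>P. \<forall>y\<in>P. \<forall>z\<in>P. le x y \<and> le y z \<longrightarrow> le x z)
   \<and> (\<exists>b\<in>P. \<forall>x\<in>P. le b x) \<and> (\<exists>t\<in>P. \<forall>x\<in>P. le x t)"

definition covers :: "'a set \<Rightarrow> ('a \<Rightarrow> 'a \<Rightarrow> bool) \<Rightarrow> 'a \<Rightarrow> 'a \<Rightarrow> bool" where
  "covers P le x y \<longleftrightarrow> x \<in> P \<and> y \<in> P \<and> le x y \<and> x \<noteq> y
     \<and> \<not> (\<exists>z\<in>P. le x z \<and> le z y \<and> z \<noteq> x \<and> z \<noteq> y)"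

definition sat_chain :: "'a set \<Rightarrow> ('a \<Rightarrow> 'a \<Rightarrow> bool) \<Rightarrow> 'a \<Rightarrow> 'a \<Rightarrow> 'a list \<Rightarrow> bool" where
  "sat_chain P le x y c \<longleftrightarrow> c \<noteq> [] \<and> hd c = x \<and> last c = y
     \<and> (\<forall>i. Suc i < length c \<longrightarrow> covers P le (c ! i) (c ! Suc i))"

definition label_seq :: "('a \<Rightarrow> 'a \<Rightarrow> 'b) \<Rightarrow> 'a list \<Rightarrow> 'b list" where
  "label_seq lab c = map (\<lambda>i. lab (c ! i) (c ! Suc i)) [0..<length c - 1]"

text \<open>EL-labelling w.r.t. a strict order lt on labels; chains are compared by the
  lexicographic order on label sequences induced by lt (a proper prefix is smaller).\<close>
definition is_EL_labelling ::
  "'a set \<Rightarrow> ('a \<Rightarrow> 'a \<Rightarrow> bool) \<Rightarrow> ('b \<Rightarrow> 'b \<Rightarrow> bool) \<Rightarrow> ('a \<Rightarrow> 'a \<Rightarrow> 'b) \<Rightarrow> bool" where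
  "is_EL_labelling P le lt lab \<longleftrightarrow> bounded_poset P le \<and>
    (\<forall>x\<in>P. \<forall>y\<in>P. le x y \<longrightarrow>
       (\<exists>!c. sat_chain P le x y c \<and> sorted_wrt lt (label_seq lab c))
     \<and> (\<forall>c c'. sat_chain P le x y c \<and> sorted_wrt lt (label_seq lab c)
            \<and> sat_chain P le x y c' \<and> c' \<noteq> c
            \<longrightarrow> (label_seq lab c, label_seq lab c') \<in> lexord {(a, b). lt a b}))"

definition lex2_lt :: "int \<times> int \<Rightarrow> int \<times> int \<Rightarrow> bool" where
  "lex2_lt p q \<longleftrightarrow> fst p < fst q \<or> (fst p = fst q \<and> snd p < snd q)"

definition tr_label :: "nat list \<Rightarrow> nat list \<Rightarrow> int \<times> int" where
  "tr_label u v = (let i = (THE i. i < length u \<and> u ! i \<noteq> v ! i) in (int (i + 1), int (u ! i)))"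

definition weakly_decr :: "(int \<times> int) list \<Rightarrow> bool" where
  "weakly_decr s \<longleftrightarrow> sorted_wrt (\<lambda>a b. b = a \<or> lex2_lt b a) s"

end

(* Every covering in Tr(n) raises a single letter u_i to the least larger value that keeps a
   triword, and its label records the position i together with the old letter u_i.  Along a
   saturated chain from x to y the label positions are exactly the positions where x and y
   differ.  Hence a lambda-increasing chain must start at the leftmost such position and a
   weakly decreasing one at the rightmost; since a covering of x is determined by the position
   of its label, induction along the chain shows that both kinds of chains are unique and that
   every other chain has a larger label at the first step where it deviates from the increasing
   one.  The increasing chain exists because raising the leftmost differing letter of x to its
   value in y stays inside Tr(n): a 0 there in y is already a 0 in x, and all letters to its
   left are those of y. *)

theory Submission
  imports Defs
begin

section \<open>Saturated chains\<close>

lemma sat_chain_singleton [simp]: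
  "sat_chain P le x y [a] \<longleftrightarrow> a = x \<and> y = x"
  unfolding sat_chain_def by auto

lemma sat_chain_Cons_Cons:
  "sat_chain P le x y (a # b # c) \<longleftrightarrow> a = x \<and> covers P le x b \<and> sat_chain P le b y (b # c)"
  unfolding sat_chain_def by (auto simp: All_less_Suc2)

lemma sat_chain_eq_Cons: "sat_chain P le x y c \<Longrightarrow> c = x # tl c"
  by (cases c) (auto simp: sat_chain_def)

lemma sat_chain_cases [consumes 1, case_names singleton step]:
  assumes "sat_chain P le x y c"
  obtains "c = [x]" "y = x"
  | b cs where "c = x # b # cs" "covers P le x b" "sat_chain P le b y (b # cs)"
  using assms
  by (cases c rule: remdups_adj.cases) (auto simp: sat_chain_Cons_Cons sat_chain_def[of _ _ _ _ "[]"])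

lemma sat_chain_induct [consumes 1, case_names singleton step]:
  assumes "sat_chain P le x y c"
    and "\<And>x. Q x x [x]"
    and "\<And>x b y cs. covers P le x b \<Longrightarrow> sat_chain P le b y (b # cs) \<Longrightarrow> Q b y (b # cs)
           \<Longrightarrow> Q x y (x # b # cs)"
  shows "Q x y c"
  using assms(1)
proof (induction c arbitrary: x)
  case Nil
  then show ?case by (simp add: sat_chain_def)
next
  case (Cons a c)
  from Cons.prems show ?case
  proof (cases rule: sat_chain_cases)
    case singleton
    then show ?thesis using assms(2) by simp
  next
    case (step b cs)
    then show ?thesis using Cons.IH assms(3) by simp
  qed
qed

lemma label_seq_singleton [simp]: "label_seq lab [a] = []"
  unfolding label_seq_def by simp

lemma label_seq_Cons_Cons [simp]: "label_seq lab (a # b # c) = lab a b # label_seq lab (b # c)"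
proof -
  have "[0..<length (a # b # c) - 1] = 0 # map Suc [0..<length (b # c) - 1]"
    by (simp add: upt_conv_Cons map_Suc_upt del: upt_Suc)
  then show ?thesis unfolding label_seq_def by simp
qed

lemma sat_chain_le:
  assumes "reflp le" "transp le" "sat_chain P le x y c"
  shows "le x y"
  using assms(3)
proof (induction rule: sat_chain_induct)
  case (singleton x)
  show ?case using assms(1) by (rule reflpD)
next
  case (step x b y cs)
  then show ?case using assms(2) by (auto simp: covers_def dest: transpD)
qed

lemma sat_chain_same_ends:
  assumes "reflp le" "transp le" "antisymp le" "sat_chain P le x x c"
  shows "c = [x]"
  using assms(4)
proof (cases rule: sat_chain_cases)
  case (step b cs)
  have "le b x" using sat_chain_le[OF assms(1,2) step(3)] .
  with step(2) have False using assms(3) by (auto simp: covers_def dest: antisympD)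
  then show ?thesis ..
qed

section \<open>Triwords under the componentwise order\<close>

lemma mem_Tr_iff:
  "u \<in> Tr n \<longleftrightarrow> length u = n \<and> (\<forall>i<n. u ! i \<le> 2) \<and> (1 \<le> n \<longrightarrow> u ! 0 \<noteq> 2)
     \<and> (\<forall>i j. i < j \<and> j < n \<and> u ! i = 0 \<longrightarrow> u ! j \<noteq> 1)"
proof -
  have "set u \<subseteq> {0, 1, 2} \<longleftrightarrow> (\<forall>i<length u. u ! i \<le> (2::nat))"
    by (auto simp: set_conv_nth)
  then show ?thesis
    unfolding Tr_def triword_def by auto
qed

lemma Tr_length: "u \<in> Tr n \<Longrightarrow> length u = n"
  by (simp add: mem_Tr_iff)

lemma reflp_comp_le: "reflp comp_le"
  by (simp add: reflp_def comp_le_def)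

lemma transp_comp_le: "transp comp_le"
  unfolding transp_def comp_le_def by (metis order_trans)

lemma antisymp_comp_le: "antisymp comp_le"
  unfolding antisymp_def comp_le_def by (metis nth_equalityI order_antisym)

lemmas sat_chain_comp_le_same_ends =
  sat_chain_same_ends[OF reflp_comp_le transp_comp_le antisymp_comp_le]

lemma comp_le_list_update:
  "i < length u \<Longrightarrow> u ! i \<le> a \<Longrightarrow> comp_le u (u[i := a])"
  by (simp add: comp_le_def nth_list_update)

lemma list_update_comp_le:
  "comp_le u v \<Longrightarrow> a \<le> v ! i \<Longrightarrow> comp_le (u[i := a]) v"
  by (cases "i < length u") (auto simp: comp_le_def nth_list_update list_update_beyond)

lemma comp_le_first_difference:
  assumes "comp_le x y" "x \<noteq> y"
  obtains i where "i < length x" "x ! i < y ! i" "\<forall>k<i. x ! k = y ! k"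
proof -
  have "\<exists>k<length x. x ! k \<noteq> y ! k"
    using assms by (metis comp_le_def nth_equalityI)
  then obtain i where i: "i < length x" "x ! i \<noteq> y ! i"
    and least: "\<forall>k<i. \<not> (k < length x \<and> x ! k \<noteq> y ! k)"
    using exists_least_iff[of "\<lambda>k. k < length x \<and> x ! k \<noteq> y ! k"] by blast
  moreover have "x ! i \<le> y ! i" using assms(1) i(1) by (simp add: comp_le_def)
  ultimately show ?thesis using that by fastforce
qed

lemma Tr_bounded_poset:
  assumes "n \<ge> 1"
  shows "bounded_poset (Tr n) comp_le"
proof -
  let ?bot = "replicate n 0" and ?top = "1 # replicate (n - 1) 2"
  have bot: "?bot \<in> Tr n" and top: "?top \<in> Tr n"
    using assms by (auto simp: mem_Tr_iff nth_Cons')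
  have "comp_le ?bot u" if "u \<in> Tr n" for u
    using that by (simp add: comp_le_def mem_Tr_iff)
  moreover have "comp_le u ?top" if "u \<in> Tr n" for u
  proof -
    have "u ! 0 \<le> 2" "u ! 0 \<noteq> 2" using that assms by (auto simp: mem_Tr_iff)
    then have "u ! i \<le> ?top ! i" if "i < n" for i
      using that \<open>u \<in> Tr n\<close> by (cases i) (auto simp: mem_Tr_iff)
    then show ?thesis using that assms by (simp add: comp_le_def Tr_length)
  qed
  ultimately show ?thesis
    unfolding bounded_poset_def using bot top
      reflpD[OF reflp_comp_le] transpD[OF transp_comp_le] antisympD[OF antisymp_comp_le]
    by blast
qed

lemma Tr_update_first_difference:
  assumes x: "x \<in> Tr n" and y: "y \<in> Tr n" and le: "comp_le x y" and i: "i < n"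
    and agree: "\<forall>k<i. x ! k = y ! k"
  shows "x[i := y ! i] \<in> Tr n"
proof -
  let ?w = "x[i := y ! i]"
  have lx: "length x = n" using x by (rule Tr_length)
  have w_nth: "?w ! k = (if k = i then y ! i else x ! k)" if "k < n" for k
    using that lx i by simp
  have "?w ! b \<noteq> 1" if ab: "a < b" "b < n" and wa: "?w ! a = 0" for a b
  proof (cases "a = i")
    case True
    have "x ! i \<le> y ! i" using le i lx by (simp add: comp_le_def)
    then have "x ! a = 0" using True wa w_nth[of a] ab by simp
    then show ?thesis using x ab True w_nth[of b] by (auto simp: mem_Tr_iff)
  next
    case False
    then have xa: "x ! a = 0" using wa w_nth[of a] ab by simp
    show ?thesis
    proof (cases "b = i")
      case True
      then have "y ! a = 0" using agree xa ab by auto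
      then show ?thesis using y ab True w_nth[of b] by (auto simp: mem_Tr_iff)
    next
      case False
      then show ?thesis using x xa ab w_nth[of b] by (auto simp: mem_Tr_iff)
    qed
  qed
  moreover have "?w ! k \<le> 2" if "k < n" for k
    using x y that w_nth[of k] by (auto simp: mem_Tr_iff)
  moreover have "1 \<le> n \<longrightarrow> ?w ! 0 \<noteq> 2"
    using x y w_nth[of 0] by (auto simp: mem_Tr_iff)
  ultimately show ?thesis using lx unfolding mem_Tr_iff by auto
qed

lemma tr_label_list_update:
  assumes "i < length u" "a \<noteq> u ! i"
  shows "tr_label u (u[i := a]) = (int (i + 1), int (u ! i))"
proof -
  have "(THE k. k < length u \<and> u ! k \<noteq> u[i := a] ! k) = i"
    by (rule the_equality) (use assms in \<open>auto simp: nth_list_update split: if_splits\<close>)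
  then show ?thesis unfolding tr_label_def Let_def by simp
qed

lemma covers_TrE:
  assumes "covers (Tr n) comp_le u v"
  obtains i a where "i < n" "u ! i < a" "v = u[i := a]"
    "\<And>b. u ! i < b \<Longrightarrow> b < a \<Longrightarrow> u[i := b] \<notin> Tr n"
    "tr_label u v = (int (i + 1), int (u ! i))"
proof -
  have u: "u \<in> Tr n" and v: "v \<in> Tr n" and le: "comp_le u v" and "u \<noteq> v"
    and no_between: "\<And>w. w \<in> Tr n \<Longrightarrow> comp_le u w \<Longrightarrow> comp_le w v \<Longrightarrow> w = u \<or> w = v"
    using assms unfolding covers_def by auto
  have lu: "length u = n" using u by (rule Tr_length)
  obtain i where i: "i < n" and less: "u ! i < v ! i" and agree: "\<forall>k<i. u ! k = v ! k"
    using comp_le_first_difference[OF le \<open>u \<noteq> v\<close>] lu by metis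
  have between: "comp_le u (u[i := b])" "comp_le (u[i := b]) v" "u[i := b] \<noteq> u"
    if "u ! i < b" "b \<le> v ! i" for b
    using that le i lu
    by (auto simp: comp_le_list_update list_update_comp_le dest: arg_cong[where f = "\<lambda>w. w ! i"])
  have "u[i := v ! i] = v"
    using no_between[OF Tr_update_first_difference[OF u v le i(1) agree]] between[OF less] by blast
  moreover have "u[i := b] \<notin> Tr n" if "u ! i < b" "b < v ! i" for b
  proof
    assume "u[i := b] \<in> Tr n"
    then have "u[i := b] = v" using no_between between[of b] that by fastforce
    then show False using that i lu by (metis less_irrefl nth_list_update_eq)
  qed
  moreover have "tr_label u v = (int (i + 1), int (u ! i))"
    using tr_label_list_update[of i u "v ! i"] i less lu \<open>u[i := v ! i] = v\<close> by simp
  ultimately show ?thesis using that[of i "v ! i"] i(1) less by simp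
qed

lemma covers_TrI:
  assumes u: "u \<in> Tr n" and v: "u[i := a] \<in> Tr n" and i: "i < n" and less: "u ! i < a"
    and gap: "\<And>b. u ! i < b \<Longrightarrow> b < a \<Longrightarrow> u[i := b] \<notin> Tr n"
  shows "covers (Tr n) comp_le u (u[i := a])"
proof -
  have lu: "length u = n" using u by (rule Tr_length)
  have "w = u \<or> w = u[i := a]"
    if w: "w \<in> Tr n" "comp_le u w" "comp_le w (u[i := a])" for w
  proof -
    have "w ! k = u ! k" if "k \<noteq> i" "k < n" for k
      using w(2,3) that lu by (fastforce simp: comp_le_def)
    then have "w = u[i := w ! i]"
      using w(1) lu i by (intro nth_equalityI) (auto simp: Tr_length nth_list_update)
    moreover have "u ! i \<le> w ! i" "w ! i \<le> a"
      using w(2,3) i lu by (auto simp: comp_le_def)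
    ultimately show ?thesis using gap w(1) by (metis le_neq_implies_less list_update_id)
  qed
  moreover have "u \<noteq> u[i := a]" using less i lu by (metis less_irrefl nth_list_update_eq)
  ultimately show ?thesis
    using u v i lu less by (auto simp: covers_def comp_le_list_update)
qed

lemma covers_Tr_position_unique:
  assumes v: "covers (Tr n) comp_le u v" and w: "covers (Tr n) comp_le u w"
    and pos: "fst (tr_label u v) = fst (tr_label u w)"
  shows "v = w"
proof -
  obtain i a where i: "i < n" "u ! i < a" and v_eq: "v = u[i := a]"
    and gap_v: "\<And>b. u ! i < b \<Longrightarrow> b < a \<Longrightarrow> u[i := b] \<notin> Tr n"
    and lab_v: "tr_label u v = (int (i + 1), int (u ! i))"
    using v by (elim covers_TrE) blast
  obtain j b where j: "j < n" "u ! j < b" and w_eq: "w = u[j := b]"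
    and gap_w: "\<And>c. u ! j < c \<Longrightarrow> c < b \<Longrightarrow> u[j := c] \<notin> Tr n"
    and lab_w: "tr_label u w = (int (j + 1), int (u ! j))"
    using w by (elim covers_TrE) blast
  have "j = i" using pos lab_v lab_w by simp
  have "v \<in> Tr n" "w \<in> Tr n" using v w by (simp_all add: covers_def)
  then show ?thesis
    using i j gap_v gap_w v_eq w_eq \<open>j = i\<close> by (cases a b rule: linorder_cases) auto
qed

lemma covers_Tr_nth:
  assumes "covers (Tr n) comp_le x b"
  shows "x ! k \<le> b ! k" "fst (tr_label x b) \<noteq> int (k + 1) \<Longrightarrow> b ! k = x ! k"
proof -
  have "length x = n" using assms by (simp add: covers_def Tr_length)
  moreover obtain i a where "i < n" "x ! i < a" "b = x[i := a]" "tr_label x b = (int (i + 1), int (x ! i))"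
    using assms by (elim covers_TrE) blast
  ultimately show "x ! k \<le> b ! k" "fst (tr_label x b) \<noteq> int (k + 1) \<Longrightarrow> b ! k = x ! k"
    by (auto simp: nth_list_update)
qed

lemma covers_Tr_at_first_difference:
  assumes x: "x \<in> Tr n" and y: "y \<in> Tr n" and le: "comp_le x y" and "x \<noteq> y"
  obtains i a where "i < n" "\<forall>k<i. x ! k = y ! k" "x ! i < a" "a \<le> y ! i"
    "covers (Tr n) comp_le x (x[i := a])"
proof -
  obtain i where i: "i < n" "x ! i < y ! i" and agree: "\<forall>k<i. x ! k = y ! k"
    using comp_le_first_difference[OF le \<open>x \<noteq> y\<close>] x by (metis Tr_length)
  let ?P = "\<lambda>b. x ! i < b \<and> x[i := b] \<in> Tr n"
  define a where "a = (LEAST b. ?P b)"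
  have "?P (y ! i)" using i Tr_update_first_difference[OF x y le i(1) agree] by simp
  then have "?P a" "a \<le> y ! i" unfolding a_def by (rule LeastI, rule Least_le)
  moreover have "x[i := b] \<notin> Tr n" if "x ! i < b" "b < a" for b
    using not_less_Least[of b ?P] that unfolding a_def by blast
  ultimately show ?thesis using that[of i a] i agree covers_TrI[OF x _ i(1)] by blast
qed

section \<open>Labels along saturated chains of Tr(n)\<close>

lemma asym_lex2_lt: "asym {(a, b). lex2_lt a b}"
  by (rule asymI) (auto simp: lex2_lt_def)

lemma sat_chain_Tr_labels_between:
  assumes "sat_chain (Tr n) comp_le x y c" "l \<in> set (label_seq tr_label c)"
  shows "\<exists>j v. x ! j \<le> v \<and> v < y ! j \<and> l = (int (j + 1), int v)"
  using assms
proof (induction rule: sat_chain_induct)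
  case (singleton x)
  then show ?case by simp
next
  case (step x b y cs)
  have "comp_le b y" using sat_chain_le[OF reflp_comp_le transp_comp_le step.hyps(2)] .
  show ?case
  proof (cases "l = tr_label x b")
    case True
    obtain i a where "i < n" "x ! i < a" "b = x[i := a]" "tr_label x b = (int (i + 1), int (x ! i))"
      using step.hyps(1) by (elim covers_TrE) blast
    moreover have "b ! i \<le> y ! i"
      using \<open>comp_le b y\<close> \<open>i < n\<close> step.hyps(1) by (auto simp: comp_le_def covers_def Tr_length)
    ultimately show ?thesis using True step.hyps(1) by (auto simp: covers_def Tr_length)
  next
    case False
    then show ?thesis
      using step covers_Tr_nth(1)[OF step.hyps(1)] by (fastforce intro: order_trans)
  qed
qed

lemma sat_chain_Tr_label_at:
  assumes "sat_chain (Tr n) comp_le x y c" "x ! k \<noteq> y ! k"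
  shows "\<exists>l\<in>set (label_seq tr_label c). fst l = int (k + 1)"
  using assms
proof (induction rule: sat_chain_induct)
  case (singleton x)
  then show ?case by simp
next
  case (step x b y cs)
  show ?case
  proof (cases "fst (tr_label x b) = int (k + 1)")
    case False
    then have "b ! k \<noteq> y ! k" using covers_Tr_nth(2)[OF step.hyps(1)] step.prems by simp
    then show ?thesis using step.IH by auto
  qed simp
qed

lemma sat_chain_Tr_first_position:
  assumes "sat_chain (Tr n) comp_le x y (x # b # cs)"
  obtains k where "x ! k \<noteq> y ! k" "fst (tr_label x b) = int (k + 1)"
  using sat_chain_Tr_labels_between[OF assms, of "tr_label x b"] that by fastforce

lemma increasing_chain_Tr_first_position_le:
  assumes c: "sat_chain (Tr n) comp_le x y (x # b # cs)"
    and incr: "sorted_wrt lex2_lt (label_seq tr_label (x # b # cs))"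
    and c': "sat_chain (Tr n) comp_le x y (x # b' # cs')"
  shows "fst (tr_label x b) \<le> fst (tr_label x b')"
proof (rule ccontr)
  assume less: "\<not> ?thesis"
  obtain k where k: "x ! k \<noteq> y ! k" "fst (tr_label x b') = int (k + 1)"
    using c' by (rule sat_chain_Tr_first_position)
  have cov: "covers (Tr n) comp_le x b" and b: "sat_chain (Tr n) comp_le b y (b # cs)"
    using c by (simp_all add: sat_chain_Cons_Cons)
  have "fst (tr_label x b) \<noteq> int (k + 1)" using less k(2) by linarith
  then have "b ! k \<noteq> y ! k" using covers_Tr_nth(2)[OF cov] k(1) by simp
  then obtain l where l: "l \<in> set (label_seq tr_label (b # cs))" "fst l = int (k + 1)"
    using sat_chain_Tr_label_at[OF b] by blast
  then have "lex2_lt (tr_label x b) l" using incr by simp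
  then have "fst (tr_label x b) \<le> fst l" by (auto simp: lex2_lt_def)
  then show False using less k(2) l(2) by linarith
qed

lemma weakly_decr_chain_Tr_first_position_ge:
  assumes c: "sat_chain (Tr n) comp_le x y (x # b # cs)"
    and decr: "weakly_decr (label_seq tr_label (x # b # cs))"
    and c': "sat_chain (Tr n) comp_le x y (x # b' # cs')"
  shows "fst (tr_label x b') \<le> fst (tr_label x b)"
proof (rule ccontr)
  assume less: "\<not> ?thesis"
  obtain k where k: "x ! k \<noteq> y ! k" "fst (tr_label x b') = int (k + 1)"
    using c' by (rule sat_chain_Tr_first_position)
  have cov: "covers (Tr n) comp_le x b" and b: "sat_chain (Tr n) comp_le b y (b # cs)"
    using c by (simp_all add: sat_chain_Cons_Cons)
  have "fst (tr_label x b) \<noteq> int (k + 1)" using less k(2) by linarith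
  then have "b ! k \<noteq> y ! k" using covers_Tr_nth(2)[OF cov] k(1) by simp
  then obtain l where l: "l \<in> set (label_seq tr_label (b # cs))" "fst l = int (k + 1)"
    using sat_chain_Tr_label_at[OF b] by blast
  then have "l = tr_label x b \<or> lex2_lt l (tr_label x b)"
    using decr by (simp add: weakly_decr_def)
  then have "fst l \<le> fst (tr_label x b)" by (auto simp: lex2_lt_def)
  then show False using less k(2) l(2) by linarith
qed

lemma increasing_chain_Tr_exists:
  assumes "x \<in> Tr n" "y \<in> Tr n" "comp_le x y"
  shows "\<exists>c. sat_chain (Tr n) comp_le x y c \<and> sorted_wrt lex2_lt (label_seq tr_label c)"
  using assms
proof (induction "\<Sum>k<n. y ! k - x ! k" arbitrary: x rule: less_induct)
  case less
  note x = less.prems(1) and y = less.prems(2) and le = less.prems(3)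
  show ?case
  proof (cases "x = y")
    case True
    then show ?thesis by (intro exI[of _ "[y]"]) simp
  next
    case False
    obtain i a where i: "i < n" and agree: "\<forall>k<i. x ! k = y ! k" and a: "x ! i < a" "a \<le> y ! i"
      and cov: "covers (Tr n) comp_le x (x[i := a])"
      using covers_Tr_at_first_difference[OF x y le False] by blast
    let ?z = "x[i := a]"
    have lx: "length x = n" using x by (rule Tr_length)
    have z: "?z \<in> Tr n" using cov by (simp add: covers_def)
    have zy: "comp_le ?z y" using le a(2) by (rule list_update_comp_le)
    have "(\<Sum>k<n. y ! k - ?z ! k) < (\<Sum>k<n. y ! k - x ! k)"
    proof (rule sum_strict_mono_ex1)
      show "\<forall>k\<in>{..<n}. y ! k - ?z ! k \<le> y ! k - x ! k"
        using lx a(1) i by (auto simp: nth_list_update)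
      show "\<exists>k\<in>{..<n}. y ! k - ?z ! k < y ! k - x ! k"
        using lx a i by (intro bexI[of _ i]) auto
    qed simp
    then obtain c where c: "sat_chain (Tr n) comp_le ?z y c"
      and c_incr: "sorted_wrt lex2_lt (label_seq tr_label c)"
      using less.hyps z y zy by blast
    have lab: "tr_label x ?z = (int (i + 1), int (x ! i))"
      using tr_label_list_update[of i x a] lx i a(1) by simp
    have "lex2_lt (tr_label x ?z) l" if l_in: "l \<in> set (label_seq tr_label c)" for l
    proof -
      obtain j v where v: "?z ! j \<le> v" "v < y ! j" and l: "l = (int (j + 1), int v)"
        using sat_chain_Tr_labels_between[OF c l_in] by blast
      have "\<not> j < i" using agree v by (auto simp: nth_list_update)
      moreover have "j = i \<Longrightarrow> x ! i < v" using v(1) a(1) lx i by simp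
      ultimately show ?thesis using lab l by (auto simp: lex2_lt_def)
    qed
    moreover have "c = ?z # tl c" using c by (rule sat_chain_eq_Cons)
    ultimately have "sat_chain (Tr n) comp_le x y (x # c) \<and> sorted_wrt lex2_lt (label_seq tr_label (x # c))"
      using cov c c_incr by (metis label_seq_Cons_Cons sat_chain_Cons_Cons sorted_wrt.simps(2))
    then show ?thesis by blast
  qed
qed

lemma increasing_chain_Tr_lex_least:
  assumes "sat_chain (Tr n) comp_le x y c" "sorted_wrt lex2_lt (label_seq tr_label c)"
    and "sat_chain (Tr n) comp_le x y c'" "c' \<noteq> c"
  shows "(label_seq tr_label c, label_seq tr_label c') \<in> lexord {(a, b). lex2_lt a b}"
  using assms
proof (induction arbitrary: c' rule: sat_chain_induct)
  case (singleton x)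
  then show ?case
    using sat_chain_comp_le_same_ends by blast
next
  case (step x b y cs)
  have c: "sat_chain (Tr n) comp_le x y (x # b # cs)"
    using step.hyps(1,2) by (simp add: sat_chain_Cons_Cons)
  from step.prems(2) show ?case
  proof (cases rule: sat_chain_cases)
    case singleton
    then show ?thesis
      using c sat_chain_comp_le_same_ends by blast
  next
    case (step b' cs')
    have le: "fst (tr_label x b) \<le> fst (tr_label x b')"
      using increasing_chain_Tr_first_position_le[OF c step.prems(1)] step.prems(2) \<open>c' = _\<close>
      by blast
    show ?thesis
    proof (cases "fst (tr_label x b) = fst (tr_label x b')")
      case True
      then have "b' = b" using covers_Tr_position_unique step.hyps(1) \<open>covers _ _ x b'\<close> by metis
      then show ?thesis
        using step.IH[of "b # cs'"] step.prems(1,3) \<open>c' = _\<close> \<open>sat_chain _ _ b' y _\<close> by auto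
    next
      case False
      then show ?thesis using le \<open>c' = _\<close> by (simp add: lex2_lt_def)
    qed
  qed
qed

lemma weakly_decr_chain_Tr_unique:
  assumes "sat_chain (Tr n) comp_le x y c" "weakly_decr (label_seq tr_label c)"
    and "sat_chain (Tr n) comp_le x y c'" "weakly_decr (label_seq tr_label c')"
  shows "c = c'"
  using assms
proof (induction arbitrary: c' rule: sat_chain_induct)
  case (singleton x)
  then show ?case
    using sat_chain_comp_le_same_ends by metis
next
  case (step x b y cs)
  have c: "sat_chain (Tr n) comp_le x y (x # b # cs)"
    using step.hyps(1,2) by (simp add: sat_chain_Cons_Cons)
  from step.prems(2) show ?case
  proof (cases rule: sat_chain_cases)
    case singleton
    then show ?thesis
      using c sat_chain_comp_le_same_ends by blast
  next
    case (step b' cs')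
    have c': "sat_chain (Tr n) comp_le x y (x # b' # cs')" using step.prems(2) \<open>c' = _\<close> by simp
    have "fst (tr_label x b) = fst (tr_label x b')"
      using weakly_decr_chain_Tr_first_position_ge[OF c step.prems(1) c']
        weakly_decr_chain_Tr_first_position_ge[OF c' _ c] step.prems(3) \<open>c' = _\<close> by fastforce
    then have "b' = b" using covers_Tr_position_unique step.hyps(1) \<open>covers _ _ x b'\<close> by metis
    then show ?thesis
      using step.IH[of "b # cs'"] step.prems(1,3) \<open>c' = _\<close> \<open>sat_chain _ _ b' y _\<close>
      by (auto simp: weakly_decr_def)
  qed
qed

theorem theorem2p1:
  fixes n :: nat
  assumes "n \<ge> 1"
  shows "is_EL_labelling (Tr n) comp_le lex2_lt tr_label
       \<and> (\<forall>x\<in>Tr n. \<forall>y\<in>Tr n. comp_le x y \<longrightarrow>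
            (\<forall>c c'. sat_chain (Tr n) comp_le x y c \<and> weakly_decr (label_seq tr_label c)
                 \<and> sat_chain (Tr n) comp_le x y c' \<and> weakly_decr (label_seq tr_label c')
                 \<longrightarrow> c = c'))"
proof -
  have "is_EL_labelling (Tr n) comp_le lex2_lt tr_label"
    unfolding is_EL_labelling_def
  proof (intro conjI ballI impI allI)
    show "bounded_poset (Tr n) comp_le" using assms by (rule Tr_bounded_poset)
  next
    fix x y assume "x \<in> Tr n" "y \<in> Tr n" "comp_le x y"
    then obtain c where "sat_chain (Tr n) comp_le x y c" "sorted_wrt lex2_lt (label_seq tr_label c)"
      using increasing_chain_Tr_exists by blast
    then show "\<exists>!c. sat_chain (Tr n) comp_le x y c \<and> sorted_wrt lex2_lt (label_seq tr_label c)"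
      using increasing_chain_Tr_lex_least lexord_asymmetric[OF asym_lex2_lt] by metis
  qed (use increasing_chain_Tr_lex_least in blast)
  then show ?thesis using weakly_decr_chain_Tr_unique by blast
qed

end
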